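(* Assume the standing assumptions below, and let $\Delta>0$ be a constant such that for every $N\in 2h^\star\mathbb N$ and every state $\underline\sigma\in\{\pm1\}^{\Lambda_N}$ whose block array is not $(h^\star,\ldots,h^\star)$ one has $E_N(\underline\sigma)-Ne(h^\star)>\Delta$ (such a $\Delta$, independent of $N$, exists by the energy-gap result of Giuliani–Lebowitz–Lieb). Then for every $N\in\mathbb N$ and every state $\underline\sigma\in\{\pm1\}^{\Lambda_N}$ whose block array is not $(h^\star,\ldots,h^\star)$, $$F_N(\underline\sigma)\ge \tilde\Delta:=\frac{\Delta}{2h^\star}.$$ In particular, if $N$ is not a multiple of $2h^\star$, then $F_N(\underline\sigma)\ge\tilde\Delta$ for every $\underline\sigma\in\{\pm1\}^{\Lambda_N}$.
   Context: Fix $p>1$ and $J>0$. For $N\in\mathbb N$ let $\Lambda_N=\mathbb Z/N\mathbb Z$; a state is $\underline\sigma\in\{\pm1\}^{\Lambda_N}$, identified with its $N$-periodic extension to $\mathbb Z$ (so it can also be regarded as a state in $\{\pm1\}^{\Lambda_{MN}}$ for any $M\in\mathbb N$). The energy is $$E_N(\underline\sigma)=-J\sum_{i\in\Lambda_N}\sigma_i\sigma_{i+1}+\sum_{i=1}^N\sum_{j\in\mathbb Z,\,j\neq i}\frac{\sigma_i\sigma_j}{|i-j|^p} =-J\sum_{i\in\Lambda_N}\sigma_i\sigma_{i+1}+\sum_{i,j\in\Lambda_N,\,i\neq j}\sum_{n\in\mathbb Z}\frac{\sigma_i\sigma_j}{|i-j+nN|^p}+\frac{2}{N^{p-1}}\sum_{n\ge1}\frac1{n^p}.$$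 Block arrays: up to a translation (which does not change the energy), every state is described by the cyclic array $(h_1,\ldots,h_M)$ of lengths of its maximal runs of consecutive equal spins (cyclically), consecutive blocks having opposite signs, $h_1+\cdots+h_M=N$ ($M$ even if $M>1$); we write $E_N(h_1,\ldots,h_M)$ for the energy of such a state. For $h\in\mathbb N$, $e(h)=E_{2h}(h,h)/(2h)$ is the $h$-periodic energy per site. Standing assumptions: either $1<p\le2$, or $p>2$ and $J<J_p:=\frac1{\Gamma(p)}\int_0^\infty\frac{\alpha^{p-1}e^{-\alpha}}{(1-e^{-\alpha})^2}d\alpha$; and $e$ has a unique minimizer $h^\star$ on $\mathbb N$. The renormalized energy is $F_N(\underline\sigma)=E_N(\underline\sigma)-Ne(h^\star)$. *)

theory Defs
  imports "HOL-Analysis.Analysis"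
begin

text \<open>A state on \<Lambda>_N, identified with its N-periodic extension to the integers.\<close>
definition is_state :: "nat \<Rightarrow> (int \<Rightarrow> real) \<Rightarrow> bool" where
  "is_state N \<sigma> \<longleftrightarrow> (\<forall>i. \<sigma> i = 1 \<or> \<sigma> i = -1) \<and> (\<forall>i. \<sigma> (i + int N) = \<sigma> i)"

definition energy :: "real \<Rightarrow> real \<Rightarrow> nat \<Rightarrow> (int \<Rightarrow> real) \<Rightarrow> real" where
  "energy p J N \<sigma> =
     - J * (\<Sum>i\<in>{1..int N}. \<sigma> i * \<sigma> (i + 1))
     + (\<Sum>i\<in>{1..int N}. infsum (\<lambda>j. \<sigma> i * \<sigma> j / (real_of_int \<bar>i - j\<bar>) powr p) {j. j \<noteq> i})"

text \<open>The h-periodic striped state (blocks of length h of alternating sign), i.e. block array (h,h) on \<Lambda>_{2h}.\<close>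
definition stripe :: "nat \<Rightarrow> int \<Rightarrow> real" where
  "stripe h i = (if even (i div int h) then 1 else -1)"

definition e_per_site :: "real \<Rightarrow> real \<Rightarrow> nat \<Rightarrow> real" where
  "e_per_site p J h = energy p J (2 * h) (stripe h) / real (2 * h)"

definition J_crit :: "real \<Rightarrow> real" where
  "J_crit p = integral {0<..} (\<lambda>\<alpha>::real. \<alpha> powr (p - 1) * exp (- \<alpha>) / (1 - exp (- \<alpha>))^2) / Gamma p"

definition is_block :: "(int \<Rightarrow> real) \<Rightarrow> int \<Rightarrow> nat \<Rightarrow> bool" where
  "is_block \<sigma> a L \<longleftrightarrow> L \<ge> 1 \<and> \<sigma> (a - 1) \<noteq> \<sigma> a \<and> \<sigma> (a + int L) \<noteq> \<sigma> a
     \<and> (\<forall>k::int. 0 \<le> k \<and> k < int L \<longrightarrow> \<sigma> (a + k) = \<sigma> a)"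

text \<open>The block array is (h,...,h) (with M>1 blocks): the state has sign changes and
  every maximal run has length h.\<close>
definition block_array_all :: "nat \<Rightarrow> (int \<Rightarrow> real) \<Rightarrow> bool" where
  "block_array_all h \<sigma> \<longleftrightarrow> (\<exists>i. \<sigma> i \<noteq> \<sigma> (i + 1)) \<and> (\<forall>a L. is_block \<sigma> a L \<longrightarrow> L = h)"

definition standing_assumptions :: "real \<Rightarrow> real \<Rightarrow> nat \<Rightarrow> bool" where
  "standing_assumptions p J hs \<longleftrightarrow> p > 1 \<and> J > 0 \<and> (p \<le> 2 \<or> (p > 2 \<and> J < J_crit p))
     \<and> hs \<ge> 1 \<and> (\<forall>h::nat. h \<ge> 1 \<and> h \<noteq> hs \<longrightarrow> e_per_site p J h > e_per_site p J hs)"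

definition F_ren :: "real \<Rightarrow> real \<Rightarrow> nat \<Rightarrow> nat \<Rightarrow> (int \<Rightarrow> real) \<Rightarrow> real" where
  "F_ren p J hs N \<sigma> = energy p J N \<sigma> - real N * e_per_site p J hs"

end

theory Submission
  imports Defs
begin

text \<open>Viewing an \<open>N\<close>-periodic state as a state on \<open>\<Lambda>\<^sub>m\<^sub>N\<close> multiplies its energy by \<open>m\<close>, so
  the gap \<open>\<Delta>\<close>, assumed only for sizes divisible by \<open>2h\<^sup>\<star>\<close>, transfers to every size \<open>N\<close> after
  dividing by \<open>2h\<^sup>\<star>\<close>. States whose blocks all have length \<open>h\<^sup>\<star>\<close> are shifts of the
  \<open>2h\<^sup>\<star>\<close>-periodic stripe, hence exist only on \<open>\<Lambda>\<^sub>N\<close> with \<open>2h\<^sup>\<star>\<close> dividing \<open>N\<close>.\<close>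

lemma periodic_add_mult:
  assumes "\<And>i. f (i + int N) = f i"
  shows "f (i + int m * int N) = f i"
proof (induction m arbitrary: i)
  case 0
  then show ?case by simp
next
  case (Suc m)
  have "f (i + int (Suc m) * int N) = f ((i + int m * int N) + int N)"
    by (simp add: algebra_simps)
  then show ?case using assms Suc by simp
qed

lemma sum_periodic_shift:
  fixes f :: "int \<Rightarrow> 'a::comm_monoid_add"
  assumes "\<And>i. f (i + int N) = f i"
  shows "(\<Sum>i\<in>{int m * int N + 1..int m * int N + int N}. f i) = (\<Sum>i\<in>{1..int N}. f i)"
proof -
  have "(\<Sum>i\<in>{int m * int N + 1..int m * int N + int N}. f i)
      = (\<Sum>i\<in>(\<lambda>i. i + int m * int N) ` {1..int N}. f i)"
    by (rule sum.cong) (auto simp: image_iff intro!: bexI[where x = "_ - int m * int N"])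
  also have "\<dots> = (\<Sum>i\<in>{1..int N}. f (i + int m * int N))"
    by (subst sum.reindex) (auto simp: inj_on_def)
  finally show ?thesis
    using periodic_add_mult[of f, OF assms] by simp
qed

lemma sum_periodic_multiple:
  fixes f :: "int \<Rightarrow> real"
  assumes "\<And>i. f (i + int N) = f i"
  shows "(\<Sum>i\<in>{1..int (m * N)}. f i) = real m * (\<Sum>i\<in>{1..int N}. f i)"
proof (induction m)
  case 0
  then show ?case by simp
next
  case (Suc m)
  have split: "{1..int (Suc m * N)}
      = {1..int m * int N} \<union> {int m * int N + 1..int m * int N + int N}"
    by (auto simp: algebra_simps) (smt (verit) mult_nonneg_nonneg of_nat_0_le_iff)
  have "(\<Sum>i\<in>{1..int (Suc m * N)}. f i)
      = (\<Sum>i\<in>{1..int (m * N)}. f i) + (\<Sum>i\<in>{int m * int N + 1..int m * int N + int N}. f i)"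
    unfolding split by (subst sum.union_disjoint) auto
  then show ?case
    using Suc sum_periodic_shift[of f, where m = m, OF assms] by (simp add: algebra_simps)
qed

lemma is_state_periodic: "is_state N \<sigma> \<Longrightarrow> \<sigma> (i + int N) = \<sigma> i"
  unfolding is_state_def by blast

lemma is_state_sign: "is_state N \<sigma> \<Longrightarrow> \<sigma> i = 1 \<or> \<sigma> i = -1"
  unfolding is_state_def by blast

lemma is_state_multiple:
  assumes "is_state N \<sigma>"
  shows "is_state (m * N) \<sigma>"
  using assms periodic_add_mult[of \<sigma> N, OF is_state_periodic[OF assms]]
  unfolding is_state_def by simp

lemma energy_multiple:
  assumes "is_state N \<sigma>"
  shows "energy p J (m * N) \<sigma> = real m * energy p J N \<sigma>"
proof -
  note per = is_state_periodic[OF assms]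
  define g where "g i = \<sigma> i * \<sigma> (i + 1)" for i
  define f where "f i = infsum (\<lambda>j. \<sigma> i * \<sigma> j / (real_of_int \<bar>i - j\<bar>) powr p) {j. j \<noteq> i}" for i
  have g_per: "g (i + int N) = g i" for i
    unfolding g_def using per[of i] per[of "i + 1"] by (simp add: algebra_simps)
  have f_per: "f (i + int N) = f i" for i
  proof -
    have shift: "bij_betw (\<lambda>j. j + int N) {j. j \<noteq> i} {j. j \<noteq> i + int N}"
      by (rule bij_betwI[where g = "\<lambda>j. j - int N"]) auto
    have "f i = infsum (\<lambda>j. \<sigma> (i + int N) * \<sigma> (j + int N)
                  / (real_of_int \<bar>(i + int N) - (j + int N)\<bar>) powr p) {j. j \<noteq> i}"
      unfolding f_def using per by simp
    also have "\<dots> = f (i + int N)"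
      unfolding f_def by (rule infsum_reindex_bij_betw[OF shift])
    finally show ?thesis by simp
  qed
  have energy_eq: "energy p J n \<sigma> = - J * (\<Sum>i\<in>{1..int n}. g i) + (\<Sum>i\<in>{1..int n}. f i)"
    for n unfolding energy_def f_def g_def by simp
  show ?thesis
    unfolding energy_eq sum_periodic_multiple[of g, OF g_per] sum_periodic_multiple[of f, OF f_per]
    by (simp add: algebra_simps)
qed

lemma F_ren_multiple:
  assumes "is_state N \<sigma>"
  shows "F_ren p J hs (m * N) \<sigma> = real m * F_ren p J hs N \<sigma>"
  unfolding F_ren_def energy_multiple[OF assms] by (simp add: algebra_simps)

text \<open>On a ring a sign change at \<open>a\<close> forces another one within \<open>N\<close> sites, which delimits a
  maximal run starting at \<open>a\<close>.\<close>

lemma block_after_sign_change: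
  assumes st: "is_state N \<sigma>" and N: "N > 0" and blocks: "block_array_all h \<sigma>"
    and change: "\<sigma> (a - 1) \<noteq> \<sigma> a"
  shows "\<forall>k. 0 \<le> k \<and> k < int h \<longrightarrow> \<sigma> (a + k) = \<sigma> a" and "\<sigma> (a + int h) \<noteq> \<sigma> a"
proof -
  define P where "P k \<longleftrightarrow> k \<ge> 1 \<and> \<sigma> (a + int k) \<noteq> \<sigma> a" for k :: nat
  have "N \<noteq> 1"
    using change is_state_periodic[OF st, of "a - 1"] by auto
  then have "P (N - 1)"
    unfolding P_def using N change is_state_periodic[OF st, of "a - 1"]
    by (simp add: of_nat_diff algebra_simps)
  define L where "L = (LEAST k. P k)"
  from \<open>P (N - 1)\<close> have PL: "P L"
    unfolding L_def by (rule LeastI)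
  have run: "\<sigma> (a + k) = \<sigma> a" if "0 \<le> k" "k < int L" for k
  proof (cases "k = 0")
    case False
    have "\<not> P (nat k)"
      unfolding L_def by (rule not_less_Least) (use that in \<open>simp add: L_def\<close>)
    then show ?thesis using that False unfolding P_def by simp
  qed simp
  have "is_block \<sigma> a L"
    unfolding is_block_def using PL run change unfolding P_def by auto
  then have "L = h"
    using blocks unfolding block_array_all_def by blast
  then show "\<forall>k. 0 \<le> k \<and> k < int h \<longrightarrow> \<sigma> (a + k) = \<sigma> a" and "\<sigma> (a + int h) \<noteq> \<sigma> a"
    using run PL unfolding P_def by auto
qed

lemma block_array_all_stripe_form:
  assumes st: "is_state N \<sigma>" and N: "N > 0" and blocks: "block_array_all h \<sigma>"
    and change: "\<sigma> (a - 1) \<noteq> \<sigma> a"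
  shows "\<sigma> (a + int n) = (-1) ^ (n div h) * \<sigma> a"
proof -
  have h: "h \<ge> 1"
    using block_after_sign_change(2)[OF assms] by (cases h) auto
  note run = block_after_sign_change(1)[OF st N blocks]
  have starts: "\<sigma> (a + int (q * h) - 1) \<noteq> \<sigma> (a + int (q * h))
      \<and> \<sigma> (a + int (q * h)) = (-1) ^ q * \<sigma> a" for q
  proof (induction q)
    case 0
    then show ?case using change by simp
  next
    case (Suc q)
    define b where "b = a + int (q * h)"
    have b_change: "\<sigma> (b - 1) \<noteq> \<sigma> b"
      using Suc unfolding b_def by simp
    have "\<sigma> (b + int h - 1) = \<sigma> b"
      using run[OF b_change, rule_format, of "int h - 1"] h by (simp add: algebra_simps)
    moreover have "\<sigma> (b + int h) = - \<sigma> b"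
      using block_after_sign_change(2)[OF st N blocks b_change]
        is_state_sign[OF st, of b] is_state_sign[OF st, of "b + int h"] by auto
    moreover have "\<sigma> b = (-1) ^ q * \<sigma> a"
      using Suc unfolding b_def by simp
    moreover have "\<sigma> b \<noteq> 0"
      using is_state_sign[OF st, of b] by auto
    moreover have "\<sigma> (b + int h - 1) \<noteq> \<sigma> (b + int h) \<and> \<sigma> (b + int h) = (-1) ^ Suc q * \<sigma> a"
      using calculation by simp
    moreover have "a + int (Suc q * h) = b + int h"
      unfolding b_def by simp
    ultimately show ?case
      by metis
  qed
  have "n = n div h * h + n mod h" by simp
  then have "\<sigma> (a + int n) = \<sigma> (a + int (n div h * h) + int (n mod h))"
    by (metis add.assoc of_nat_add)
  also have "\<dots> = \<sigma> (a + int (n div h * h))"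
    using run[rule_format, of "a + int (n div h * h)" "int (n mod h)"] starts[of "n div h"] h by simp
  finally show ?thesis
    using starts[of "n div h"] by simp
qed

lemma double_dvd_of_div_parity_shift_invariant:
  fixes h N :: nat
  assumes h: "h \<ge> 1" and parity: "\<And>n. even ((n + N) div h) \<longleftrightarrow> even (n div h)"
  shows "2 * h dvd N"
proof -
  have even_q: "even (N div h)"
    using parity[of 0] by simp
  have "N mod h = 0"
  proof (rule ccontr)
    assume r: "N mod h \<noteq> 0"
    have "h - N mod h + N = (N div h + 1) * h"
      using mod_less_divisor[of h N] h div_mult_mod_eq[of N h] add_mult_distrib[of "N div h" 1 h]
      by linarith
    then have "(h - N mod h + N) div h = N div h + 1"
      using h by simp
    moreover have "(h - N mod h) div h = 0"
      using r h by (intro div_less) linarith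
    ultimately show False
      using parity[of "h - N mod h"] even_q by simp
  qed
  moreover obtain k where "N div h = 2 * k"
    using even_q by blast
  ultimately have "N = 2 * h * k"
    using div_mult_mod_eq[of N h] by (simp add: algebra_simps)
  then show ?thesis by simp
qed

lemma block_array_all_double_dvd:
  assumes st: "is_state N \<sigma>" and N: "N > 0" and blocks: "block_array_all h \<sigma>"
  shows "2 * h dvd N"
proof -
  obtain i where "\<sigma> i \<noteq> \<sigma> (i + 1)"
    using blocks unfolding block_array_all_def by blast
  then have change: "\<sigma> (i + 1 - 1) \<noteq> \<sigma> (i + 1)" by simp
  note stripe = block_array_all_stripe_form[OF st N blocks change]
  have h: "h \<ge> 1"
    using block_after_sign_change(2)[OF st N blocks change] by (cases h) auto
  have nonzero: "\<sigma> (i + 1) \<noteq> 0"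
    using is_state_sign[OF st, of "i + 1"] by auto
  have "(-1::real) ^ ((n + N) div h) = (-1) ^ (n div h)" for n
    using stripe[of "n + N"] stripe[of n] is_state_periodic[OF st, of "i + 1 + int n"] nonzero
    by (simp add: algebra_simps)
  then have "even ((n + N) div h) \<longleftrightarrow> even (n div h)" for n
    by (metis neg_one_even_power neg_one_odd_power one_neq_neg_one)
  then show ?thesis
    by (rule double_dvd_of_div_parity_shift_invariant[OF h])
qed

theorem mainTheorem1:
  fixes p J \<Delta> :: real and hs :: nat
  assumes "standing_assumptions p J hs"
    and "\<Delta> > 0"
    and "\<forall>N::nat. N > 0 \<and> (2 * hs) dvd N \<longrightarrow>
           (\<forall>\<sigma>. is_state N \<sigma> \<and> \<not> block_array_all hs \<sigma> \<longrightarrow>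
              energy p J N \<sigma> - real N * e_per_site p J hs > \<Delta>)"
  shows "(\<forall>N::nat. N > 0 \<longrightarrow> (\<forall>\<sigma>. is_state N \<sigma> \<and> \<not> block_array_all hs \<sigma> \<longrightarrow>
            F_ren p J hs N \<sigma> \<ge> \<Delta> / real (2 * hs)))
       \<and> (\<forall>N::nat. N > 0 \<and> \<not> (2 * hs) dvd N \<longrightarrow> (\<forall>\<sigma>. is_state N \<sigma> \<longrightarrow>
            F_ren p J hs N \<sigma> \<ge> \<Delta> / real (2 * hs)))"
proof -
  have hs: "hs \<ge> 1"
    using assms(1) unfolding standing_assumptions_def by blast
  have gap: "F_ren p J hs N \<sigma> \<ge> \<Delta> / real (2 * hs)"
    if "N > 0" "is_state N \<sigma>" "\<not> block_array_all hs \<sigma>" for N \<sigma>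
  proof -
    have "F_ren p J hs (2 * hs * N) \<sigma> > \<Delta>"
      using assms(3)[rule_format, of "2 * hs * N" \<sigma>] that hs is_state_multiple[OF that(2)]
      unfolding F_ren_def by simp
    then have "real (2 * hs) * F_ren p J hs N \<sigma> > \<Delta>"
      unfolding F_ren_multiple[OF that(2)] .
    then show ?thesis
      using hs by (simp add: divide_le_eq mult.commute)
  qed
  show ?thesis
    using gap block_array_all_double_dvd by blast
qed

end
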